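(* Let $Y$ be a variable. For all positive integers $n$, $$\det_{0\le i,j\le n-1}\left(Y+2^{-2\lceil(i+j+1)/2\rceil}\binom{2\lceil(i+j+1)/2\rceil}{\lceil(i+j+1)/2\rceil}\right)=(-1)^{\binom n2}2^{-n^2}\big(2\lceil n/2\rceil Y+1\big).$$ *)

theory Defs
  imports "HOL-Computational_Algebra.Polynomial" "Jordan_Normal_Form.Determinant"
begin

definition cb :: "nat \<Rightarrow> nat \<Rightarrow> real" where
  "cb i j = (let m = nat \<lceil>real (i + j + 1) / 2\<rceil>
             in real ((2 * m) choose m) / 2 ^ (2 * m))"

end

theory Submission
  imports Defs
begin

text \<open>
  The entry of the matrix depends only on k = i + j; call it Y + c k. Subtracting from every
  column its left neighbour removes Y from all columns but the first, and consecutive c k differ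
  by minus the Catalan moment ballot k 0 / 2 ^ (k + 1), where ballot i k counts the paths of
  i steps +1/-1 from 0 to k that never go below 0. The Hankel identity
  sum_k ballot i k * ballot j k = ballot (i + j) 0 then factors the differenced matrix as B * W,
  with B lower triangular (entries ballot i k / 2 ^ i) and W having the columns
  -ballot j k / 2 ^ (j + 1) for j > 0 and first column (1/2 + Y, 1 + 2 Y, 1 + 3 Y, ...).
  Replacing the first row of W by the combination of its rows with coefficients
  1, 0, -1, 0, 1, ... (a row operation of determinant 1) clears that row except for its first
  entry, an alternating partial sum equal to +-(1/2 + ceil(n/2) Y); the remaining minor is
  triangular.
\<close>

fun ballot :: "nat \<Rightarrow> nat \<Rightarrow> nat" where
  "ballot 0 k = (if k = 0 then 1 else 0)"
| ballot_Suc: "ballot (Suc i) k = (if k = 0 then 0 else ballot i (k - 1)) + ballot i (Suc k)"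

declare ballot_Suc [simp del]

lemma ballot_eq_0_if_less: "i < k \<Longrightarrow> ballot i k = 0"
  by (induction i arbitrary: k) (auto simp: ballot_Suc)

lemma ballot_same [simp]: "ballot i i = 1"
  by (induction i) (auto simp: ballot_Suc ballot_eq_0_if_less)

lemma ballot_eq_0_if_odd: "odd (i + k) \<Longrightarrow> ballot i k = 0"
proof (induction i arbitrary: k)
  case 0
  then show ?case by (cases k) auto
next
  case (Suc i)
  then show ?case using Suc.IH[of "k - 1"] Suc.IH[of "Suc k"] by (cases k) (auto simp: ballot_Suc)
qed

lemma ballot_closed_form:
  assumes "2 * r \<le> i"
  shows "(of_nat (ballot i (i - 2 * r)) :: 'a::ring_1)
           = of_nat (i choose r) - (if r = 0 then 0 else of_nat (i choose (r - 1)))"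
  using assms
proof (induction i arbitrary: r)
  case 0
  then show ?case by simp
next
  case (Suc i)
  show ?case
  proof (cases r)
    case 0
    then show ?thesis using ballot_eq_0_if_less[of i "Suc (Suc i)"] by (simp add: ballot_Suc)
  next
    case (Suc r')
    have "Suc (Suc i - 2 * r) = i - 2 * r'"
      using Suc \<open>2 * r \<le> Suc i\<close> by auto
    then have step_up: "(of_nat (ballot i (Suc (Suc i - 2 * r))) :: 'a)
        = of_nat (i choose r') - (if r' = 0 then 0 else of_nat (i choose (r' - 1)))"
      using Suc.IH[of r'] Suc \<open>2 * r \<le> Suc i\<close> by simp
    have pascal: "(of_nat (Suc i choose r) :: 'a) - of_nat (Suc i choose r')
        = (of_nat (i choose r') - (if r' = 0 then 0 else of_nat (i choose (r' - 1))))
          + (of_nat (i choose r) - of_nat (i choose r'))"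
      using Suc by (cases r') simp_all
    show ?thesis
    proof (cases "2 * r = Suc i")
      case True
      then have "i choose r = i choose (i - r)" "i - r = r'"
        using Suc by (auto intro: binomial_symmetric)
      then show ?thesis using step_up pascal True Suc by (simp add: ballot_Suc)
    next
      case False
      then have "2 * r \<le> i" using Suc.prems by simp
      then have "Suc i - 2 * r = Suc (i - 2 * r)" by simp
      then show ?thesis using step_up pascal Suc.IH[OF \<open>2 * r \<le> i\<close>] Suc by (simp add: ballot_Suc)
    qed
  qed
qed

lemma sum_ballot_0:
  fixes g :: "nat \<Rightarrow> 'a::comm_semiring_1"
  assumes "0 < N"
  shows "(\<Sum>k<N. of_nat (ballot 0 k) * g k) = g 0"
proof -
  have "(\<Sum>k<N. of_nat (ballot 0 k) * g k) = (\<Sum>k<N. if k = 0 then g k else 0)"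
    by (rule sum.cong) auto
  then show ?thesis using assms by simp
qed

lemma sum_mult_ballot_Suc:
  fixes f :: "nat \<Rightarrow> 'a::comm_semiring_1"
  assumes "Suc j < N"
  shows "(\<Sum>k<N. f k * of_nat (ballot (Suc j) k))
       = (\<Sum>k<N. of_nat (ballot j k) * (f (Suc k) + (if k = 0 then 0 else f (k - 1))))"
proof -
  obtain N' where N: "N = Suc N'" and "j < N'" using assms by (cases N) auto
  have "(\<Sum>k<N. f k * of_nat (if k = 0 then 0 else ballot j (k - 1)))
      = (\<Sum>k<N'. f (Suc k) * of_nat (ballot j k))"
    unfolding N sum.lessThan_Suc_shift by simp
  also have "\<dots> = (\<Sum>k<N. of_nat (ballot j k) * f (Suc k))"
    unfolding N sum.lessThan_Suc using ballot_eq_0_if_less[OF \<open>j < N'\<close>]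
    by (simp add: mult.commute)
  finally have down: "(\<Sum>k<N. f k * of_nat (if k = 0 then 0 else ballot j (k - 1)))
      = (\<Sum>k<N. of_nat (ballot j k) * f (Suc k))" .
  have "(\<Sum>k<N. of_nat (ballot j k) * (if k = 0 then 0 else f (k - 1)))
      = (\<Sum>k<N'. of_nat (ballot j (Suc k)) * f k)"
    unfolding N sum.lessThan_Suc_shift by simp
  also have "\<dots> = (\<Sum>k<N. f k * of_nat (ballot j (Suc k)))"
    unfolding N sum.lessThan_Suc using ballot_eq_0_if_less[of j "Suc N'"] \<open>j < N'\<close>
    by (simp add: mult.commute)
  finally have up: "(\<Sum>k<N. f k * of_nat (ballot j (Suc k)))
      = (\<Sum>k<N. of_nat (ballot j k) * (if k = 0 then 0 else f (k - 1)))" by simp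
  show ?thesis
    by (simp add: ballot_Suc distrib_left distrib_right sum.distrib down up)
qed

lemma sum_ballot_mult_ballot: "i < N \<Longrightarrow> (\<Sum>k<N. ballot i k * ballot j k) = ballot (i + j) 0"
proof (induction i arbitrary: j)
  case 0
  then show ?case using sum_ballot_0[of N "ballot j"] by simp
next
  case (Suc i)
  have "(\<Sum>k<N. ballot (Suc i) k * ballot j k) = (\<Sum>k<N. ballot j k * ballot (Suc i) k)"
    by (simp add: mult.commute)
  also have "\<dots> = (\<Sum>k<N. ballot i k * ballot (Suc j) k)"
    using sum_mult_ballot_Suc[OF Suc.prems, of "ballot j"] by (simp add: ballot_Suc add.commute)
  also have "\<dots> = ballot (Suc i + j) 0"
    using Suc.IH[of "Suc j"] Suc.prems by simp
  finally show ?case .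
qed

lemma sum_ballot_mult_Suc: "i < N \<Longrightarrow> (\<Sum>k<N. ballot i k * Suc k) = 2 ^ i"
proof (induction i)
  case 0
  then show ?case using sum_ballot_0[of N Suc] by simp
next
  case (Suc i)
  have "(\<Sum>k<N. ballot (Suc i) k * Suc k) = (\<Sum>k<N. Suc k * ballot (Suc i) k)"
    by (simp add: mult.commute)
  also have "\<dots> = (\<Sum>k<N. ballot i k * (Suc (Suc k) + (if k = 0 then 0 else Suc (k - 1))))"
    using sum_mult_ballot_Suc[OF Suc.prems, of Suc] by simp
  also have "\<dots> = (\<Sum>k<N. ballot i k * (2 * Suc k))"
    by (intro sum.cong) auto
  also have "\<dots> = 2 * (\<Sum>k<N. ballot i k * Suc k)"
    by (simp add: sum_distrib_left algebra_simps)
  finally show ?case using Suc by simp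
qed

text \<open>
  The values U k 0 of the Chebyshev polynomials of the second kind. Since
  x ^ j = sum_k ballot j k * U k (x / 2), evaluating at x = 0 gives the orthogonality below.
\<close>

definition chebyshev_U_0 :: "nat \<Rightarrow> 'a::ring_1" where
  "chebyshev_U_0 k = (if even k then (-1) ^ (k div 2) else 0)"

lemma sum_chebyshev_U_0_mult_ballot:
  assumes "j < N"
  shows "(\<Sum>k<N. chebyshev_U_0 k * of_nat (ballot j k) :: 'a::comm_ring_1) = (if j = 0 then 1 else 0)"
proof (cases j)
  case 0
  then show ?thesis using assms sum_ballot_0[of N chebyshev_U_0]
    by (simp add: mult.commute chebyshev_U_0_def)
next
  case (Suc j')
  have recurrence: "chebyshev_U_0 (Suc k) + (if k = 0 then 0 else chebyshev_U_0 (k - 1)) = (0::'a)" for k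
    by (cases k rule: parity_cases) (auto simp: chebyshev_U_0_def elim!: oddE)
  have "(\<Sum>k<N. chebyshev_U_0 k * of_nat (ballot (Suc j') k) :: 'a)
      = (\<Sum>k<N. of_nat (ballot j' k) * (chebyshev_U_0 (Suc k) + (if k = 0 then 0 else chebyshev_U_0 (k - 1))))"
    using assms Suc by (intro sum_mult_ballot_Suc) simp
  also have "\<dots> = 0"
    by (simp only: recurrence mult_zero_right sum.neutral_const)
  finally show ?thesis using Suc by simp
qed

lemma sum_chebyshev_U_0_mult_half_at_0:
  "(\<Sum>k<Suc m. chebyshev_U_0 k * (if k = 0 then 1 / 2 else 1)) = (-1) ^ (m div 2) / (2::real)"
proof (induction m)
  case (Suc m)
  then show ?case
    by (cases "even m") (auto simp: chebyshev_U_0_def elim!: evenE oddE)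
qed (simp add: chebyshev_U_0_def)

lemma sum_chebyshev_U_0_mult_Suc:
  "(\<Sum>k<Suc m. chebyshev_U_0 k * (real k + 1)) = (-1) ^ (m div 2) * real (m div 2 + 1)"
proof (induction m)
  case (Suc m)
  then show ?case
    by (cases "even m") (auto simp: chebyshev_U_0_def algebra_simps elim!: evenE oddE)
qed (simp add: chebyshev_U_0_def)

definition central_binom_scaled :: "nat \<Rightarrow> real" where
  "central_binom_scaled m = real ((2 * m) choose m) / 2 ^ (2 * m)"

lemma nat_ceiling_Suc_half: "nat \<lceil>real (Suc k) / 2\<rceil> = k div 2 + 1"
proof -
  have "\<lceil>real (Suc k) / 2\<rceil> = int (k div 2 + 1)"
    by (rule ceiling_unique) (cases "even k"; auto elim!: evenE oddE simp: field_simps)+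
  then show ?thesis by simp
qed

lemma cb_eq_central_binom_scaled: "cb i j = central_binom_scaled ((i + j) div 2 + 1)"
  using nat_ceiling_Suc_half[of "i + j"] by (simp add: cb_def central_binom_scaled_def)

lemma central_binomial_Suc_Suc:
  "(2 * m + 2) choose (m + 1) = 2 * ((2 * m) choose m) + 2 * ((2 * m) choose (m - 1))"
  if "m > 0"
proof -
  have symmetric: "(2 * m) choose (m + 1) = (2 * m) choose (m - 1)"
    using that binomial_symmetric[of "m - 1" "2 * m"] by (simp add: Suc_diff_le)
  have "(2 * m + 2) choose (m + 1)
      = (((2 * m) choose (m - 1)) + ((2 * m) choose m)) + (((2 * m) choose m) + ((2 * m) choose (m + 1)))"
    using that by (cases m) (simp_all add: numeral_eq_Suc)
  then show ?thesis using symmetric by simp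
qed

lemma central_binom_scaled_Suc:
  "central_binom_scaled (Suc m) = central_binom_scaled m - real (ballot (2 * m) 0) / 2 ^ (2 * m + 1)"
proof (cases "m = 0")
  case True
  then show ?thesis by (simp add: central_binom_scaled_def)
next
  case False
  have catalan: "real (ballot (2 * m) 0) = real ((2 * m) choose m) - real ((2 * m) choose (m - 1))"
    using ballot_closed_form[of m "2 * m"] False by simp
  have "real ((2 * m + 2) choose (m + 1))
      = 2 * real ((2 * m) choose m) + 2 * real ((2 * m) choose (m - 1))"
    using central_binomial_Suc_Suc[of m] False by simp
  then show ?thesis
    unfolding central_binom_scaled_def catalan by (simp add: field_simps power_add)
qed

lemma central_binom_scaled_step:
  "central_binom_scaled (Suc k div 2 + 1)
     = central_binom_scaled (k div 2 + 1) - real (ballot (Suc k) 0) / 2 ^ (k + 2)"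
proof (cases "even k")
  case True
  then show ?thesis using ballot_eq_0_if_odd[of "Suc k" 0] by simp
next
  case False
  then obtain t where k: "k = 2 * t + 1" by (elim oddE)
  then have "Suc k div 2 + 1 = Suc (k div 2 + 1)" "Suc k = 2 * (k div 2 + 1)"
    "k + 2 = 2 * (k div 2 + 1) + 1" by simp_all
  then show ?thesis by (simp only: central_binom_scaled_Suc)
qed

lemma sum_ballot_mult_half_at_0:
  "i < N \<Longrightarrow> (\<Sum>k<N. real (ballot i k) * (if k = 0 then 1 / 2 else 1))
     = 2 ^ i * central_binom_scaled (i div 2 + 1)"
proof (induction i)
  case 0
  then show ?case
    using sum_ballot_0[of N "\<lambda>k. if k = 0 then 1 / 2 else 1 :: real"]
    by (simp add: central_binom_scaled_def)
next
  case (Suc i)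
  let ?g = "\<lambda>k. if k = 0 then 1 / 2 else 1 :: real"
  have "(\<Sum>k<N. real (ballot (Suc i) k) * ?g k) = (\<Sum>k<N. ?g k * real (ballot (Suc i) k))"
    by (simp add: mult.commute)
  also have "\<dots> = (\<Sum>k<N. real (ballot i k) * (?g (Suc k) + (if k = 0 then 0 else ?g (k - 1))))"
    using Suc.prems by (rule sum_mult_ballot_Suc)
  also have "\<dots> = (\<Sum>k<N. 2 * (real (ballot i k) * ?g k) - (if k = 1 then real (ballot i k) / 2 else 0))"
    by (intro sum.cong refl) (simp add: numeral_eq_Suc)
  also have "\<dots> = 2 * (\<Sum>k<N. real (ballot i k) * ?g k) - real (ballot i 1) / 2"
    using Suc.prems by (simp add: sum_subtractf sum_distrib_left)
  also have "\<dots> = 2 ^ Suc i * central_binom_scaled (Suc i div 2 + 1)"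
    using Suc central_binom_scaled_step[of i] by (simp add: ballot_Suc field_simps)
  finally show ?case .
qed

lemma sum_pCons_pCons_0: "(\<Sum>k\<in>A. [: x k, y k :]) = [: \<Sum>k\<in>A. x k, \<Sum>k\<in>A. y k :]"
  by (induction A rule: infinite_finite_induct) auto

lemma index_mat_mult_mat:
  "i < n \<Longrightarrow> j < p \<Longrightarrow> (mat n m f * mat m p g) $$ (i, j) = (\<Sum>k<m. f (i, k) * g (k, j))"
  by (simp add: scalar_prod_def atLeast0LessThan)

lemma det_mat_upper_triangular:
  fixes f :: "nat \<times> nat \<Rightarrow> 'a::comm_ring_1"
  assumes "\<And>i j. j < i \<Longrightarrow> i < n \<Longrightarrow> f (i, j) = 0"
  shows "det (mat n n f) = (\<Prod>i<n. f (i, i))"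
proof -
  have "det (mat n n f) = prod_list (diag_mat (mat n n f))"
    by (rule det_upper_triangular[of _ n]) (auto simp: upper_triangular_def assms)
  then show ?thesis by (simp add: prod_list_diag_prod atLeast0LessThan)
qed

lemma det_mat_lower_triangular:
  fixes f :: "nat \<times> nat \<Rightarrow> 'a::comm_ring_1"
  assumes "\<And>i j. i < j \<Longrightarrow> j < n \<Longrightarrow> f (i, j) = 0"
  shows "det (mat n n f) = (\<Prod>i<n. f (i, i))"
proof -
  have "det (mat n n f) = prod_list (diag_mat (mat n n f))"
    by (rule det_lower_triangular[of n]) (auto simp: assms)
  then show ?thesis by (simp add: prod_list_diag_prod atLeast0LessThan)
qed

definition col_diff_mat :: "nat \<Rightarrow> 'a::ring_1 mat" where
  "col_diff_mat n = mat n n (\<lambda>(k, j). if k = j then 1 else if Suc k = j then -1 else 0)"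

lemma det_col_diff_mat: "det (col_diff_mat n :: 'a::comm_ring_1 mat) = 1"
  unfolding col_diff_mat_def by (subst det_mat_upper_triangular) auto

lemma index_mult_col_diff_mat:
  assumes "A \<in> carrier_mat m n" "i < m" "j < n"
  shows "(A * col_diff_mat n) $$ (i, j) = A $$ (i, j) - (if j = 0 then 0 else A $$ (i, j - 1))"
proof -
  have "(A * col_diff_mat n) $$ (i, j)
      = (\<Sum>k<n. A $$ (i, k) * (if k = j then 1 else if Suc k = j then -1 else 0))"
    using assms by (simp add: col_diff_mat_def scalar_prod_def atLeast0LessThan)
  also have "\<dots> = (\<Sum>k<n. (if k = j then A $$ (i, k) else 0)
                        - (if j \<noteq> 0 \<and> k = j - 1 then A $$ (i, k) else 0))"
    by (rule sum.cong) auto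
  also have "\<dots> = A $$ (i, j) - (if j = 0 then 0 else A $$ (i, j - 1))"
    using assms by (auto simp: sum_subtractf)
  finally show ?thesis .
qed

definition ballot_mat :: "nat \<Rightarrow> real poly mat" where
  "ballot_mat n = mat n n (\<lambda>(i, k). [: real (ballot i k) / 2 ^ i :])"

definition right_factor_mat :: "nat \<Rightarrow> real poly mat" where
  "right_factor_mat n = mat n n (\<lambda>(k, j).
     if j = 0 then [: if k = 0 then 1 / 2 else 1, real k + 1 :]
     else [: - real (ballot j k) / 2 ^ (j + 1) :])"

lemma det_ballot_mat: "det (ballot_mat n) = [: \<Prod>i<n. 1 / 2 ^ i :]"
  unfolding ballot_mat_def
  by (subst det_mat_lower_triangular) (auto simp: ballot_eq_0_if_less prod_to_poly)

lemma index_ballot_mat_mult_right_factor_mat: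
  assumes "i < n" "j < n"
  shows "(ballot_mat n * right_factor_mat n) $$ (i, j) =
    (if j = 0 then [: central_binom_scaled (i div 2 + 1), 1 :]
     else [: - real (ballot (i + j) 0) / 2 ^ (i + j + 1) :])"
proof -
  have entry: "(ballot_mat n * right_factor_mat n) $$ (i, j) = (\<Sum>k<n. [: real (ballot i k) / 2 ^ i :] *
      (if j = 0 then [: if k = 0 then 1 / 2 else 1, real k + 1 :]
       else [: - real (ballot j k) / 2 ^ (j + 1) :]))"
    unfolding ballot_mat_def right_factor_mat_def index_mat_mult_mat[OF assms] by simp
  show ?thesis
  proof (cases "j = 0")
    case True
    have "real (\<Sum>k<n. ballot i k * Suc k) = 2 ^ i"
      using sum_ballot_mult_Suc[OF \<open>i < n\<close>] by simp
    then have linear: "(\<Sum>k<n. real (ballot i k) * (real k + 1)) / 2 ^ i = 1"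
      by (simp add: algebra_simps)
    have "(\<Sum>k<n. [: real (ballot i k) / 2 ^ i :] * [: if k = 0 then 1 / 2 else 1, real k + 1 :])
        = [: (\<Sum>k<n. real (ballot i k) * (if k = 0 then 1 / 2 else 1)) / 2 ^ i,
             (\<Sum>k<n. real (ballot i k) * (real k + 1)) / 2 ^ i :]"
      by (simp add: sum_pCons_pCons_0 sum_divide_distrib mult.commute)
    then show ?thesis
      using True entry linear sum_ballot_mult_half_at_0[OF \<open>i < n\<close>] by simp
  next
    case False
    have "real (\<Sum>k<n. ballot i k * ballot j k) = real (ballot (i + j) 0)"
      using sum_ballot_mult_ballot[OF \<open>i < n\<close>] by simp
    then have hankel: "(\<Sum>k<n. real (ballot i k) * real (ballot j k)) = real (ballot (i + j) 0)"
      by simp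
    have "(\<Sum>k<n. [: real (ballot i k) / 2 ^ i :] * [: - real (ballot j k) / 2 ^ (j + 1) :])
        = [: - (\<Sum>k<n. real (ballot i k) * real (ballot j k)) / 2 ^ (i + j + 1) :]"
      by (simp add: sum_to_poly sum_divide_distrib power_add sum_negf mult_ac)
    then show ?thesis
      using False entry hankel by simp
  qed
qed

lemma hankel_mult_col_diff_mat:
  "mat n n (\<lambda>(i, j). [: cb i j, 1 :]) * col_diff_mat n = ballot_mat n * right_factor_mat n"
  (is "?H * _ = _")
proof (rule eq_matI)
  fix i j assume "i < dim_row (ballot_mat n * right_factor_mat n)"
    "j < dim_col (ballot_mat n * right_factor_mat n)"
  then have ij: "i < n" "j < n" by (simp_all add: ballot_mat_def right_factor_mat_def)
  then have "(?H * col_diff_mat n) $$ (i, j) = [: cb i j, 1 :] - (if j = 0 then 0 else [: cb i (j - 1), 1 :])"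
    by (subst index_mult_col_diff_mat[of _ n n]) auto
  then show "(?H * col_diff_mat n) $$ (i, j) = (ballot_mat n * right_factor_mat n) $$ (i, j)"
    using ij central_binom_scaled_step[of "i + (j - 1)"]
    by (cases j) (simp_all add: index_ballot_mat_mult_right_factor_mat cb_eq_central_binom_scaled)
qed (simp_all add: ballot_mat_def right_factor_mat_def col_diff_mat_def)

definition chebyshev_row_mat :: "nat \<Rightarrow> real poly mat" where
  "chebyshev_row_mat n = mat n n (\<lambda>(i, k). if i = 0 then [: chebyshev_U_0 k :] else if i = k then 1 else 0)"

lemma det_chebyshev_row_mat: "det (chebyshev_row_mat n) = 1"
  unfolding chebyshev_row_mat_def
  by (subst det_mat_upper_triangular) (auto simp: chebyshev_U_0_def intro!: prod.neutral)

lemma index_chebyshev_row_mat_mult_right_factor_mat: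
  assumes "i < Suc m" "j < Suc m"
  shows "(chebyshev_row_mat (Suc m) * right_factor_mat (Suc m)) $$ (i, j) =
    (if i = 0 then (if j = 0 then [: (-1) ^ (m div 2) / 2, (-1) ^ (m div 2) * real (m div 2 + 1) :] else 0)
     else right_factor_mat (Suc m) $$ (i, j))"
proof -
  have entry: "(chebyshev_row_mat (Suc m) * right_factor_mat (Suc m)) $$ (i, j)
      = (\<Sum>k<Suc m. (if i = 0 then [: chebyshev_U_0 k :] else if i = k then 1 else 0) *
          (if j = 0 then [: if k = 0 then 1 / 2 else 1, real k + 1 :]
           else [: - real (ballot j k) / 2 ^ (j + 1) :]))"
    unfolding chebyshev_row_mat_def right_factor_mat_def index_mat_mult_mat[OF assms] by simp
  consider "i = 0" "j = 0" | "i = 0" "j \<noteq> 0" | "i \<noteq> 0" by blast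
  then show ?thesis
  proof cases
    case 1
    have "(\<Sum>k<Suc m. [: chebyshev_U_0 k :] * [: if k = 0 then 1 / 2 else 1, real k + 1 :])
        = [: \<Sum>k<Suc m. chebyshev_U_0 k * (if k = 0 then 1 / 2 else 1),
             \<Sum>k<Suc m. chebyshev_U_0 k * (real k + 1) :]"
      by (simp add: sum_pCons_pCons_0 mult.commute del: sum.lessThan_Suc)
    then show ?thesis
      using entry 1 sum_chebyshev_U_0_mult_half_at_0[of m] sum_chebyshev_U_0_mult_Suc[of m]
      by (simp del: sum.lessThan_Suc)
  next
    case 2
    have "(\<Sum>k<Suc m. chebyshev_U_0 k * real (ballot j k)) = 0"
      using sum_chebyshev_U_0_mult_ballot[OF \<open>j < Suc m\<close>] 2 by (simp del: sum.lessThan_Suc)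
    then have "(\<Sum>k<Suc m. [: chebyshev_U_0 k :] * [: - real (ballot j k) / 2 ^ (j + 1) :]) = 0"
      by (simp add: sum_to_poly sum_negf mult.commute del: sum.lessThan_Suc flip: sum_divide_distrib)
    then show ?thesis using entry 2 by simp
  next
    case 3
    then show ?thesis
      using entry assms by (simp add: right_factor_mat_def if_distrib[of "\<lambda>x. x * _"] cong: if_cong)
  qed
qed

lemma mat_delete_chebyshev_row_mat_mult_right_factor_mat:
  "mat_delete (chebyshev_row_mat (Suc m) * right_factor_mat (Suc m)) 0 0
     = mat m m (\<lambda>(i, j). [: - real (ballot (Suc j) (Suc i)) / 2 ^ (j + 2) :])"
    (is "mat_delete ?P 0 0 = ?M")
proof (rule eq_matI)
  have carrier: "chebyshev_row_mat (Suc m) \<in> carrier_mat (Suc m) (Suc m)"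
    "right_factor_mat (Suc m) \<in> carrier_mat (Suc m) (Suc m)"
    by (simp_all add: chebyshev_row_mat_def right_factor_mat_def)
  then show "dim_row (mat_delete ?P 0 0) = dim_row ?M" "dim_col (mat_delete ?P 0 0) = dim_col ?M"
    by simp_all
  fix i j assume "i < dim_row ?M" "j < dim_col ?M"
  then have "i < m" "j < m" by simp_all
  then have "mat_delete ?P 0 0 $$ (i, j) = right_factor_mat (Suc m) $$ (Suc i, Suc j)"
    using carrier by (simp add: mat_delete_def index_chebyshev_row_mat_mult_right_factor_mat
        del: index_mult_mat(1))
  then show "mat_delete ?P 0 0 $$ (i, j) = ?M $$ (i, j)"
    using \<open>i < m\<close> \<open>j < m\<close> by (simp add: right_factor_mat_def)
qed

lemma det_right_factor_mat:
  "det (right_factor_mat (Suc m))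
     = [: (-1) ^ (m div 2) / 2, (-1) ^ (m div 2) * real (m div 2 + 1) :]
       * [: \<Prod>j<m. - 1 / 2 ^ (j + 2) :]"
proof -
  let ?P = "chebyshev_row_mat (Suc m) * right_factor_mat (Suc m)"
  let ?d = "[: (-1) ^ (m div 2) / 2, (-1) ^ (m div 2) * real (m div 2 + 1) :]"
  have carrier: "chebyshev_row_mat (Suc m) \<in> carrier_mat (Suc m) (Suc m)"
    "right_factor_mat (Suc m) \<in> carrier_mat (Suc m) (Suc m)"
    by (simp_all add: chebyshev_row_mat_def right_factor_mat_def)
  then have "det (right_factor_mat (Suc m)) = det ?P"
    using det_mult[OF carrier] det_chebyshev_row_mat by simp
  also have "\<dots> = (\<Sum>j<Suc m. ?P $$ (0, j) * cofactor ?P 0 j)"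
    using carrier by (intro laplace_expansion_row) auto
  also have "\<dots> = (\<Sum>j<Suc m. if j = 0 then ?d * cofactor ?P 0 0 else 0)"
    by (rule sum.cong) (simp_all add: index_chebyshev_row_mat_mult_right_factor_mat)
  also have "\<dots> = ?d * cofactor ?P 0 0"
    by (simp del: sum.lessThan_Suc)
  also have "cofactor ?P 0 0
      = det (mat m m (\<lambda>(i, j). [: - real (ballot (Suc j) (Suc i)) / 2 ^ (j + 2) :]))"
    by (simp add: cofactor_def mat_delete_chebyshev_row_mat_mult_right_factor_mat)
  also have "\<dots> = [: \<Prod>j<m. - 1 / 2 ^ (j + 2) :]"
    by (subst det_mat_upper_triangular) (auto simp: ballot_eq_0_if_less prod_to_poly)
  finally show ?thesis .
qed

lemma prod_inverse_powers_of_two: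
  "(\<Prod>i<Suc m. 1 / 2 ^ i :: real) * (\<Prod>j<m. - 1 / 2 ^ (j + 2)) = 2 * (-1) ^ m / 2 ^ (Suc m)\<^sup>2"
proof (induction m)
  case (Suc m)
  have "(Suc (Suc m))\<^sup>2 = (Suc m)\<^sup>2 + Suc m + (m + 2)"
    by (simp add: power2_eq_square)
  then show ?case
    using Suc by (simp add: power_add field_simps)
qed simp

lemma minus_one_power_Suc_choose_two: "(-1 :: 'a::ring_1) ^ (Suc m choose 2) = (-1) ^ (m + m div 2)"
proof -
  have "even (Suc m choose 2) = even (m + m div 2)"
  proof (cases "even m")
    case True
    then obtain t where "m = 2 * t" by (elim evenE)
    then have "Suc m choose 2 = t * (2 * t + 1)" by (simp add: choose_two)
    then show ?thesis using \<open>m = 2 * t\<close> by simp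
  next
    case False
    then obtain t where "m = 2 * t + 1" by (elim oddE)
    then have "Suc m choose 2 = (t + 1) * (2 * t + 1)" by (simp add: choose_two algebra_simps)
    then show ?thesis using \<open>m = 2 * t + 1\<close> by simp
  qed
  then show ?thesis by (simp add: minus_one_power_iff)
qed

theorem mainTheorem10:
  fixes n :: nat
  assumes "n \<ge> 1"
  shows "det (mat n n (\<lambda>(i, j). [: cb i j, 1 :] :: real poly))
       = [: (-1) ^ (n choose 2) / 2 ^ (n^2) :]
         * [: 1, 2 * real (nat \<lceil>real n / 2\<rceil>) :]"
proof -
  obtain m where n: "n = Suc m" using assms by (cases n) auto
  let ?H = "mat n n (\<lambda>(i, j). [: cb i j, 1 :] :: real poly)"
  have carrier: "?H \<in> carrier_mat n n" "col_diff_mat n \<in> carrier_mat n n"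
    "ballot_mat n \<in> carrier_mat n n" "right_factor_mat n \<in> carrier_mat n n"
    by (simp_all add: col_diff_mat_def ballot_mat_def right_factor_mat_def)
  have "det ?H = det (?H * col_diff_mat n)"
    using det_mult[OF carrier(1,2)] by (simp add: det_col_diff_mat)
  also have "\<dots> = det (ballot_mat n) * det (right_factor_mat n)"
    unfolding hankel_mult_col_diff_mat using det_mult[OF carrier(3,4)] .
  also have "\<dots> = [: \<Prod>i<Suc m. 1 / 2 ^ i :]
      * ([: (-1) ^ (m div 2) / 2, (-1) ^ (m div 2) * real (m div 2 + 1) :]
         * [: \<Prod>j<m. - 1 / 2 ^ (j + 2) :])"
    unfolding n det_ballot_mat det_right_factor_mat ..
  also have "\<dots> = [: (-1) ^ (n choose 2) / 2 ^ (n^2) :] * [: 1, 2 * real (nat \<lceil>real n / 2\<rceil>) :]"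
    using prod_inverse_powers_of_two[of m]
    unfolding n minus_one_power_Suc_choose_two nat_ceiling_Suc_half
    by (simp add: power_add field_simps del: sum.lessThan_Suc)
  finally show ?thesis .
qed

end
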